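(* Let $d$ be a metric on $\mathbb R^n$ induced by a norm, $\delta>0$, and let $\tilde w:\mathcal D^n(\delta)\to\mathcal D^n(\delta)$ be the $\delta$-roundoff of a contraction $w:\mathbb R^n\to\mathbb R^n$ on $(\mathbb R^n,d)$ with contractivity factor $\lambda\in[0,1)$ and fixed point $x_f$. Let $r_0=\theta(1-\lambda)^{-1}$ and $$\Lambda(x_f,r_0)=\{\tilde y\in\mathcal D^n(\delta):d(\tilde y,x_f)\le\theta(1-\lambda)^{-1}\}.$$ Then $\Lambda(x_f,r_0)$ is an absorbing set for $\tilde w$ in $\mathcal D^n(\delta)$, and $\tilde w(\Lambda(x_f,r_0))\subset\Lambda(x_f,r_0)$.
   Context: For $m\in\mathbb Z^n$, $C_\delta(m)=\prod_{j=1}^n[(m_j-\tfrac12)\delta,(m_j+\tfrac12)\delta)$; $\mathcal D^n(\delta)=\{\delta m:m\in\mathbb Z^n\}\subset\mathbb R^n$. The $\delta$-roundoff of $x\in\mathbb R^n$ is $\tilde x=\delta m$ where $x\in C_\delta(m)$; the $\delta$-roundoff of $w$ is $\tilde w(\tilde x)=\widetilde{w(\tilde x)}$. $\theta:=\tfrac12\operatorname{diam}_d(C_\delta(0))$. A set $\Lambda\subset\mathcal D^n(\delta)$ is an absorbing set for $\tilde w$ (in $\mathcal D^n(\delta)$) if for every $\tilde x\in\mathcal D^n(\delta)$ there is $N$ with $\tilde w^{\circ i}(\tilde x)\in\Lambda$ for all $i\ge N$. *)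

theory Defs
  imports "HOL-Analysis.Analysis"
begin

text \<open>A norm on R^n (not necessarily the Euclidean one); the metric is d(x,y) = N(x - y).\<close>
definition is_norm :: "(real^'n \<Rightarrow> real) \<Rightarrow> bool" where
  "is_norm N \<longleftrightarrow> (\<forall>x. 0 \<le> N x) \<and> (\<forall>x. N x = 0 \<longleftrightarrow> x = 0)
     \<and> (\<forall>c x. N (c *\<^sub>R x) = \<bar>c\<bar> * N x) \<and> (\<forall>x y. N (x + y) \<le> N x + N y)"

definition cell :: "real \<Rightarrow> ('n::finite \<Rightarrow> int) \<Rightarrow> (real^'n) set" where
  "cell \<delta> m = {x. \<forall>j. (real_of_int (m j) - 1/2) * \<delta> \<le> x $ j \<and> x $ j < (real_of_int (m j) + 1/2) * \<delta>}"

definition grid :: "real \<Rightarrow> (real^'n::finite) set" where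
  "grid \<delta> = {x. \<exists>m::'n \<Rightarrow> int. x = (\<chi> j. \<delta> * real_of_int (m j))}"

text \<open>delta-roundoff: the lattice point delta*m with x in C_delta(m).\<close>
definition roundoff :: "real \<Rightarrow> real^'n \<Rightarrow> real^'n" where
  "roundoff \<delta> x = (\<chi> j. \<delta> * real_of_int \<lfloor>x $ j / \<delta> + 1/2\<rfloor>)"

definition theta :: "(real^'n::finite \<Rightarrow> real) \<Rightarrow> real \<Rightarrow> real" where
  "theta N \<delta> = (SUP p \<in> cell \<delta> (\<lambda>_. 0) \<times> cell \<delta> (\<lambda>_. 0). N (fst p - snd p)) / 2"

definition absorbing :: "real \<Rightarrow> (real^'n::finite \<Rightarrow> real^'n) \<Rightarrow> (real^'n) set \<Rightarrow> bool" where
  "absorbing \<delta> f \<Lambda> \<longleftrightarrow> \<Lambda> \<subseteq> grid \<delta> \<and>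
     (\<forall>x \<in> grid \<delta>. \<exists>K. \<forall>i\<ge>K. (f ^^ i) x \<in> \<Lambda>)"

end

theory Submission
  imports Defs
begin

text \<open>Rounding moves a point by at most \<open>\<theta>\<close> in \<open>N\<close>, so for \<open>F = roundoff \<delta> \<circ> w\<close> the
triangle inequality gives \<open>N (F y - x\<^sub>f) \<le> \<theta> + \<lambda> N (y - x\<^sub>f)\<close>. Hence the \<open>N\<close>-ball of radius
\<open>r\<^sub>0 = \<theta> / (1 - \<lambda>)\<close> is invariant, and along every orbit the excess of \<open>N ((F ^^ i) x - x\<^sub>f)\<close>
over \<open>r\<^sub>0\<close> is at most \<open>\<lambda>\<^sup>i\<close> times its initial value, so it eventually drops below any
positive bound. As \<open>N\<close> is equivalent to the Euclidean norm, an \<open>N\<close>-ball contains only finitely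
many lattice points, so an orbit takes only finitely many values in \<open>(r\<^sub>0, r\<^sub>0 + 1]\<close>;
eventually it stays below all of them, that is, inside the ball.\<close>

lemma is_normD:
  assumes "is_norm N"
  shows "0 \<le> N x" "N x = 0 \<longleftrightarrow> x = 0" "N (c *\<^sub>R x) = \<bar>c\<bar> * N x" "N (x + y) \<le> N x + N y"
  using assms unfolding is_norm_def by auto

lemma is_norm_minus_commute:
  assumes "is_norm N"
  shows "N (x - y) = N (y - x)"
  using is_normD(3)[OF assms, of "-1" "x - y"] by simp

lemma is_norm_triangle_diff:
  assumes "is_norm N"
  shows "N (x - z) \<le> N (x - y) + N (y - z)"
  using is_normD(4)[OF assms, of "x - y" "y - z"] by simp

lemma is_norm_sum:
  assumes "is_norm N" "finite S"
  shows "N (\<Sum>i\<in>S. f i) \<le> (\<Sum>i\<in>S. N (f i))"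
  using assms(2)
proof (induction S rule: finite_induct)
  case empty
  then show ?case using is_normD(2)[OF assms(1), of 0] by simp
next
  case (insert x F)
  then show ?case using is_normD(4)[OF assms(1), of "f x" "sum f F"] by simp
qed

lemma is_norm_le_sum_axis:
  assumes "is_norm N"
  shows "N x \<le> (\<Sum>j\<in>UNIV. \<bar>x $ j\<bar> * N (axis j 1))"
proof -
  have "N x = N (\<Sum>j\<in>UNIV. (x $ j) *\<^sub>R axis j 1)"
    using basis_expansion[of x] by (simp add: scalar_mult_eq_scaleR)
  also have "\<dots> \<le> (\<Sum>j\<in>UNIV. N ((x $ j) *\<^sub>R axis j 1))"
    by (rule is_norm_sum[OF assms]) simp
  also have "\<dots> = (\<Sum>j\<in>UNIV. \<bar>x $ j\<bar> * N (axis j 1))"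
    using is_normD(3)[OF assms] by simp
  finally show ?thesis .
qed

lemma is_norm_le_norm:
  assumes "is_norm N"
  shows "N x \<le> (\<Sum>j\<in>UNIV. N (axis j 1)) * norm x"
proof -
  have "N x \<le> (\<Sum>j\<in>UNIV. \<bar>x $ j\<bar> * N (axis j 1))" by (rule is_norm_le_sum_axis[OF assms])
  also have "\<dots> \<le> (\<Sum>j\<in>UNIV. norm x * N (axis j 1))"
    by (intro sum_mono mult_right_mono component_le_norm_cart is_normD(1)[OF assms])
  finally show ?thesis by (simp add: sum_distrib_left mult.commute)
qed

lemma is_norm_lipschitz:
  fixes N :: "real^'n \<Rightarrow> real"
  assumes "is_norm N"
  shows "(\<Sum>j\<in>UNIV. N (axis j 1))-lipschitz_on S N"
proof (rule lipschitz_onI)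
  fix x y
  have "\<bar>N x - N y\<bar> \<le> N (x - y)"
    using is_normD(4)[OF assms, of "x - y" y] is_normD(4)[OF assms, of "y - x" x]
      is_norm_minus_commute[OF assms, of x y] by simp
  then show "dist (N x) (N y) \<le> (\<Sum>j\<in>UNIV. N (axis j 1)) * dist x y"
    using is_norm_le_norm[OF assms, of "x - y"] by (simp add: dist_real_def dist_norm)
  show "0 \<le> (\<Sum>j\<in>UNIV. N (axis j 1))"
    by (intro sum_nonneg is_normD(1)[OF assms])
qed

lemma is_norm_ge_norm:
  fixes N :: "real^'n \<Rightarrow> real"
  assumes "is_norm N"
  obtains c where "c > 0" "\<And>x. c * norm x \<le> N x"
proof -
  have "sphere (0::real^'n) 1 \<noteq> {}"
    using norm_axis_1[of undefined] by (auto simp: sphere_def intro!: exI[of _ "axis undefined 1"])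
  then obtain x0 where x0: "x0 \<in> sphere 0 1" "\<And>y. y \<in> sphere 0 1 \<Longrightarrow> N x0 \<le> N y"
    using continuous_attains_inf[OF compact_sphere _ lipschitz_on_continuous_on]
      is_norm_lipschitz[OF assms] by metis
  have "N x0 > 0"
    using x0(1) is_normD(1,2)[OF assms, of x0] by fastforce
  then show ?thesis
  proof (rule that)
    fix x :: "real^'n"
    show "N x0 * norm x \<le> N x"
    proof (cases "x = 0")
      case True
      then show ?thesis by (simp add: is_normD(1)[OF assms])
    next
      case False
      then have "N x0 \<le> N ((1 / norm x) *\<^sub>R x)" by (intro x0(2)) simp
      also have "\<dots> = N x / norm x" using is_normD(3)[OF assms] by simp
      finally show ?thesis using False by (simp add: field_simps)
    qed
  qed
qed

lemma bounded_is_norm_ball: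
  assumes "is_norm N"
  shows "bounded {x. N (x - x0) \<le> R}"
proof -
  obtain c where c: "c > 0" "\<And>x. c * norm x \<le> N x" using is_norm_ge_norm[OF assms] by blast
  have "{x. N (x - x0) \<le> R} \<subseteq> cball x0 (R / c)"
  proof
    fix x assume "x \<in> {x. N (x - x0) \<le> R}"
    then have "c * norm (x - x0) \<le> R" using c(2)[of "x - x0"] by simp
    then show "x \<in> cball x0 (R / c)" using c(1) by (simp add: dist_norm norm_minus_commute field_simps)
  qed
  then show ?thesis using bounded_cball bounded_subset by blast
qed

lemma finite_grid_Int_bounded:
  fixes S :: "(real^'n) set"
  assumes "\<delta> > 0" "bounded S"
  shows "finite (grid \<delta> \<inter> S)"
proof -
  obtain M where M: "\<And>x. x \<in> S \<Longrightarrow> norm x \<le> M" using assms(2) bounded_pos by blast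
  define K where "K = \<lceil>M / \<delta>\<rceil>"
  have "grid \<delta> \<inter> S \<subseteq> (\<lambda>m. \<chi> j. \<delta> * real_of_int (m j)) ` (PiE UNIV (\<lambda>_. {-K..K}))"
  proof
    fix g assume g: "g \<in> grid \<delta> \<inter> S"
    then obtain m where m: "g = (\<chi> j. \<delta> * real_of_int (m j))" unfolding grid_def by auto
    have "m j \<in> {-K..K}" for j
    proof -
      have "\<delta> * \<bar>real_of_int (m j)\<bar> \<le> M"
        using component_le_norm_cart[of g j] M[of g] g m assms(1) by (simp add: abs_mult)
      then have "\<bar>real_of_int (m j)\<bar> \<le> M / \<delta>"
        using assms(1) by (simp add: field_simps)
      then have "\<bar>real_of_int (m j)\<bar> \<le> real_of_int K"
        unfolding K_def by linarith
      then show ?thesis by auto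
    qed
    then show "g \<in> (\<lambda>m. \<chi> j. \<delta> * real_of_int (m j)) ` (PiE UNIV (\<lambda>_. {-K..K}))"
      using m by blast
  qed
  then show ?thesis by (rule finite_subset) (intro finite_imageI finite_PiE, auto)
qed

lemma roundoff_in_grid: "roundoff \<delta> x \<in> grid \<delta>"
  unfolding roundoff_def grid_def by (rule CollectI, rule exI, rule refl)

lemma cell_zero: "cell \<delta> (\<lambda>_. 0) = {x. \<forall>j. - \<delta> / 2 \<le> x $ j \<and> x $ j < \<delta> / 2}"
  unfolding cell_def by auto

lemma roundoff_error_in_cell:
  assumes "\<delta> > 0"
  shows "x - roundoff \<delta> x \<in> cell \<delta> (\<lambda>_. 0)"
  unfolding cell_zero
proof (intro CollectI allI)
  fix j
  define k where "k = \<lfloor>x $ j / \<delta> + 1/2\<rfloor>"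
  have "real_of_int k \<le> x $ j / \<delta> + 1/2" "x $ j / \<delta> + 1/2 < real_of_int k + 1"
    unfolding k_def by linarith+
  then have "\<delta> * real_of_int k \<le> x $ j + \<delta>/2" "x $ j + \<delta>/2 < \<delta> * real_of_int k + \<delta>"
    using assms by (simp_all add: field_simps)
  moreover have "(x - roundoff \<delta> x) $ j = x $ j - \<delta> * real_of_int k"
    unfolding roundoff_def k_def by simp
  ultimately show "- \<delta> / 2 \<le> (x - roundoff \<delta> x) $ j \<and> (x - roundoff \<delta> x) $ j < \<delta> / 2"
    by simp
qed

lemma bdd_above_is_norm_diff_cell:
  fixes N :: "real^'n \<Rightarrow> real"
  assumes "is_norm N"
  shows "bdd_above ((\<lambda>p. N (fst p - snd p)) ` (cell \<delta> (\<lambda>_. 0) \<times> cell \<delta> (\<lambda>_. 0)))"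
proof (rule bdd_aboveI2)
  fix p :: "(real^'n) \<times> (real^'n)"
  assume p: "p \<in> cell \<delta> (\<lambda>_. 0) \<times> cell \<delta> (\<lambda>_. 0)"
  have "N (fst p - snd p) \<le> (\<Sum>j\<in>UNIV. \<bar>(fst p - snd p) $ j\<bar> * N (axis j 1))"
    by (rule is_norm_le_sum_axis[OF assms])
  also have "\<dots> \<le> (\<Sum>j\<in>UNIV. \<delta> * N (axis j 1))"
  proof (intro sum_mono mult_right_mono is_normD(1)[OF assms])
    fix j
    have "- \<delta> / 2 \<le> fst p $ j" "fst p $ j < \<delta> / 2" "- \<delta> / 2 \<le> snd p $ j" "snd p $ j < \<delta> / 2"
      using p unfolding cell_zero by (auto simp: mem_Times_iff)
    then show "\<bar>(fst p - snd p) $ j\<bar> \<le> \<delta>"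
      unfolding abs_le_iff by simp
  qed
  finally show "N (fst p - snd p) \<le> (\<Sum>j\<in>UNIV. \<delta> * N (axis j 1))" .
qed

text \<open>The cell is half-open, so \<open>v\<close> and \<open>-v\<close> need not both lie in it; but \<open>t v\<close> and \<open>-t v\<close>
do for every \<open>0 < t < 1\<close>, which gives \<open>2 t N v \<le> diam C\<^sub>\<delta>(0)\<close>.\<close>

lemma is_norm_le_theta:
  fixes v :: "real^'n"
  assumes "is_norm N" "v \<in> cell \<delta> (\<lambda>_. 0)"
  shows "N v \<le> theta N \<delta>"
proof -
  let ?C = "cell \<delta> (\<lambda>_::'n. 0)"
  have "2 * N v \<le> (SUP p \<in> ?C \<times> ?C. N (fst p - snd p))"
  proof (rule field_le_mult_one_interval)
    fix t :: real assume t: "0 < t" "t < 1"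
    have abs_tv: "\<bar>t * v $ j\<bar> < \<delta> / 2" for j
    proof -
      have "- \<delta> / 2 \<le> v $ j" "v $ j < \<delta> / 2" using assms(2) unfolding cell_zero by auto
      then have "\<bar>t * v $ j\<bar> \<le> t * (\<delta> / 2)" "t * (\<delta> / 2) < \<delta> / 2"
        using t by (simp_all add: abs_mult mult_left_mono)
      then show ?thesis by linarith
    qed
    then have "- \<delta> / 2 < t * v $ j" "t * v $ j < \<delta> / 2" for j
      using abs_tv[of j] by linarith+
    then have "t *\<^sub>R v \<in> ?C" "(- t) *\<^sub>R v \<in> ?C"
      unfolding cell_zero by (simp_all add: less_imp_le minus_less_iff minus_le_iff)
    then have "N (t *\<^sub>R v - (- t) *\<^sub>R v) \<le> (SUP p \<in> ?C \<times> ?C. N (fst p - snd p))"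
      by (intro cSUP_upper2[OF bdd_above_is_norm_diff_cell[OF assms(1)], of "(t *\<^sub>R v, (- t) *\<^sub>R v)"]) auto
    moreover have "t *\<^sub>R v - (- t) *\<^sub>R v = (2 * t) *\<^sub>R v"
      by (simp add: scaleR_left_distrib[symmetric])
    ultimately show "t * (2 * N v) \<le> (SUP p \<in> ?C \<times> ?C. N (fst p - snd p))"
      using is_normD(3)[OF assms(1), of "2 * t" v] t by simp
  qed
  then show ?thesis unfolding theta_def by simp
qed

lemma roundoff_error_le_theta:
  assumes "is_norm N" "\<delta> > 0"
  shows "N (roundoff \<delta> x - x) \<le> theta N \<delta>"
  using is_norm_le_theta[OF assms(1) roundoff_error_in_cell[OF assms(2)]]
    is_norm_minus_commute[OF assms(1)] by metis

lemma affine_contraction_excess_le: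
  fixes e :: "nat \<Rightarrow> real"
  assumes "0 \<le> lam" "lam < 1" "\<And>i. e (Suc i) \<le> c + lam * e i"
  shows "e i - c / (1 - lam) \<le> lam ^ i * (e 0 - c / (1 - lam))"
proof (induction i)
  case 0
  then show ?case by simp
next
  case (Suc i)
  have "c + lam * (c / (1 - lam)) = c / (1 - lam)" using assms(2) by (simp add: field_simps)
  then have "e (Suc i) - c / (1 - lam) \<le> lam * (e i - c / (1 - lam))"
    using assms(3)[of i] by (simp add: algebra_simps)
  also have "\<dots> \<le> lam * (lam ^ i * (e 0 - c / (1 - lam)))"
    using Suc assms(1) by (simp add: mult_left_mono)
  finally show ?case by simp
qed

lemma eventually_less_of_affine_contraction:
  fixes e :: "nat \<Rightarrow> real"
  assumes "0 \<le> lam" "lam < 1" "\<And>i. e (Suc i) \<le> c + lam * e i" "c / (1 - lam) < a"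
  shows "eventually (\<lambda>i. e i < a) sequentially"
proof -
  have "(\<lambda>i. lam ^ i * (e 0 - c / (1 - lam))) \<longlonglongrightarrow> 0"
    using assms(1,2) by (intro tendsto_mult_left_zero LIMSEQ_power_zero) simp
  then have "eventually (\<lambda>i. lam ^ i * (e 0 - c / (1 - lam)) < a - c / (1 - lam)) sequentially"
    using assms(4) by (intro order_tendstoD(2)) auto
  then show ?thesis
  proof eventually_elim
    case (elim i)
    then show ?case using affine_contraction_excess_le[of lam e c i, OF assms(1-3)] by linarith
  qed
qed

lemma eventually_le_of_affine_contraction:
  fixes e :: "nat \<Rightarrow> real"
  assumes "0 \<le> lam" "lam < 1" "\<And>i. e (Suc i) \<le> c + lam * e i"
    and "\<And>b. finite (range e \<inter> {..b})"
  shows "eventually (\<lambda>i. e i \<le> c / (1 - lam)) sequentially"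
proof -
  let ?r = "c / (1 - lam)"
  let ?A = "range e \<inter> {?r<..?r + 1}"
  have "finite ?A" using assms(4)[of "?r + 1"] by (rule finite_subset[rotated]) auto
  then have "eventually (\<lambda>i. \<forall>a\<in>?A. e i < a) sequentially"
    by (rule eventually_ball_finite) (auto intro: eventually_less_of_affine_contraction[of lam e c, OF assms(1-3)])
  moreover have "eventually (\<lambda>i. e i < ?r + 1) sequentially"
    by (rule eventually_less_of_affine_contraction[of lam e c, OF assms(1-3)]) simp
  ultimately show ?thesis
    by eventually_elim (metis greaterThanAtMost_iff IntI less_irrefl not_le less_imp_le rangeI)
qed

lemma roundoff_contraction_step:
  assumes "is_norm N" "\<delta> > 0" "\<forall>x y. N (w x - w y) \<le> lam * N (x - y)" "w x0 = x0"
  shows "N (roundoff \<delta> (w y) - x0) \<le> theta N \<delta> + lam * N (y - x0)"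
proof -
  have "N (roundoff \<delta> (w y) - x0) \<le> N (roundoff \<delta> (w y) - w y) + N (w y - w x0)"
    using is_norm_triangle_diff[OF assms(1)] assms(4) by metis
  then show ?thesis
    using roundoff_error_le_theta[OF assms(1,2), of "w y"] assms(3)[rule_format, of y x0] by linarith
qed

lemma eventually_orbit_in_grid_ball:
  fixes F :: "real^'n \<Rightarrow> real^'n"
  assumes "is_norm N" "\<delta> > 0" "0 \<le> lam" "lam < 1"
    and "\<And>y. N (F y - x0) \<le> c + lam * N (y - x0)" "\<And>y. F y \<in> grid \<delta>" "x \<in> grid \<delta>"
  shows "eventually (\<lambda>i. (F ^^ i) x \<in> {y \<in> grid \<delta>. N (y - x0) \<le> c / (1 - lam)}) sequentially"
proof -
  have orbit: "(F ^^ i) x \<in> grid \<delta>" for i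
    using assms(6,7) by (cases i) auto
  have "range (\<lambda>i. N ((F ^^ i) x - x0)) \<inter> {..b}
      \<subseteq> (\<lambda>g. N (g - x0)) ` (grid \<delta> \<inter> {g. N (g - x0) \<le> b})" for b
    using orbit by auto
  then have "finite (range (\<lambda>i. N ((F ^^ i) x - x0)) \<inter> {..b})" for b
    by (rule finite_subset)
      (intro finite_imageI finite_grid_Int_bounded bounded_is_norm_ball assms(1,2))
  then have "eventually (\<lambda>i. N ((F ^^ i) x - x0) \<le> c / (1 - lam)) sequentially"
    using assms(3-5) by (intro eventually_le_of_affine_contraction) auto
  then show ?thesis
    by eventually_elim (use orbit in simp)
qed

theorem theorem5:
  fixes N :: "real^'n \<Rightarrow> real" and w :: "real^'n \<Rightarrow> real^'n"
    and \<delta> lam :: real and xf :: "real^'n"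
  assumes "is_norm N"
    and "\<delta> > 0"
    and "0 \<le> lam" and "lam < 1"
    and "\<forall>x y. N (w x - w y) \<le> lam * N (x - y)"
    and "w xf = xf"
  shows "absorbing \<delta> (\<lambda>y. roundoff \<delta> (w y))
           {y \<in> grid \<delta>. N (y - xf) \<le> theta N \<delta> / (1 - lam)}
       \<and> (\<lambda>y. roundoff \<delta> (w y)) ` {y \<in> grid \<delta>. N (y - xf) \<le> theta N \<delta> / (1 - lam)}
           \<subseteq> {y \<in> grid \<delta>. N (y - xf) \<le> theta N \<delta> / (1 - lam)}"
proof -
  define F where "F = (\<lambda>y. roundoff \<delta> (w y))"
  define r0 where "r0 = theta N \<delta> / (1 - lam)"
  have step: "N (F y - xf) \<le> theta N \<delta> + lam * N (y - xf)" for y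
    unfolding F_def using assms(1,2,5,6) by (rule roundoff_contraction_step)
  have F_grid: "F y \<in> grid \<delta>" for y
    unfolding F_def by (rule roundoff_in_grid)
  have "theta N \<delta> + lam * r0 = r0"
    using assms(4) unfolding r0_def by (simp add: field_simps)
  then have "N (F y - xf) \<le> r0" if "N (y - xf) \<le> r0" for y
    using step[of y] mult_left_mono[OF that assms(3)] by linarith
  then have invariant: "F ` {y \<in> grid \<delta>. N (y - xf) \<le> r0} \<subseteq> {y \<in> grid \<delta>. N (y - xf) \<le> r0}"
    using F_grid by auto
  have "\<exists>K. \<forall>i\<ge>K. (F ^^ i) x \<in> {y \<in> grid \<delta>. N (y - xf) \<le> r0}" if "x \<in> grid \<delta>" for x
    using eventually_orbit_in_grid_ball[OF assms(1-4) step F_grid that]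
    unfolding r0_def eventually_sequentially by blast
  then show ?thesis
    using invariant unfolding absorbing_def F_def[symmetric] r0_def[symmetric] by blast
qed

end
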